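(* For $O=(a,b)\in\mathbb{R}^2$ let $g_1(O):=\int_0^1\int_0^1\sqrt{(x-a)^2+(y-b)^2}\,dx\,dy$ (the expected distance from $O$ to a uniform random point of $[0,1]^2$). Then \begin{align*}g_1(O)=\;&A_1(a,b)+A_1(b,a)+A_1(b,1-a)+A_1(1-a,b)\\&+A_1(1-a,1-b)+A_1(1-b,1-a)+A_1(1-b,a)+A_1(a,1-b).\end{align*}
   Context: Define $A_1:\mathbb{R}^2\to\mathbb{R}$ by $A_1(a,b):=\int_0^a\int_0^{bx/a}\sqrt{x^2+y^2}\,dy\,dx$ if $a\ne0$ and $A_1(0,b):=0$ (integrals are oriented/signed). Equivalently, for $a\neq 0$, $A_1(a,b)=\frac{a^3}{6}\log\left(\frac{b}{|a|}+\sqrt{1+\frac{b^2}{a^2}}\right)+\frac{ab}{6}\sqrt{a^2+b^2}$. *)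

theory Defs
  imports "HOL-Analysis.Analysis"
begin

definition oint :: "real \<Rightarrow> real \<Rightarrow> (real \<Rightarrow> real) \<Rightarrow> real" where
  "oint u v f = (if u \<le> v then integral {u..v} f else - integral {v..u} f)"

definition A1 :: "real \<Rightarrow> real \<Rightarrow> real" where
  "A1 a b = (if a = 0 then 0
     else oint 0 a (\<lambda>x. oint 0 (b * x / a) (\<lambda>y. sqrt (x^2 + y^2))))"

definition g1 :: "real \<Rightarrow> real \<Rightarrow> real" where
  "g1 a b = integral {0..1} (\<lambda>y. integral {0..1} (\<lambda>x. sqrt ((x - a)^2 + (y - b)^2)))"

end

theory Submission
  imports Defs
begin

text \<open>
  \<open>F(u,v) = v/2 \<cdot> sqrt(u\<^sup>2+v\<^sup>2) + u\<^sup>2/2 \<cdot> arsinh(v/|u|)\<close> is an antiderivative of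
  \<open>sqrt(u\<^sup>2+v\<^sup>2)\<close> in \<open>v\<close>, and it is homogeneous of degree 2. Hence the inner integral
  in \<open>A\<^sub>1(a,b)\<close> is \<open>F(x, bx/a) = (x/a)\<^sup>2 F(a,b)\<close>, which gives \<open>A\<^sub>1(a,b) = a F(a,b)/3\<close>.
  Since \<open>\<partial>F/\<partial>u = u \<cdot> arsinh(v/|u|)\<close>, the function \<open>p \<mapsto> A\<^sub>1(p,q) + A\<^sub>1(q,p)\<close> is an
  antiderivative of \<open>p \<mapsto> F(p,q)\<close>. Integrating \<open>sqrt((x-a)\<^sup>2+(y-b)\<^sup>2)\<close> first in \<open>x\<close>
  and then in \<open>y\<close> therefore gives the alternating sum of \<open>A\<^sub>1(p,q) + A\<^sub>1(q,p)\<close> over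
  \<open>p \<in> {1-b, -b}\<close>, \<open>q \<in> {1-a, -a}\<close>, and as \<open>A\<^sub>1\<close> is odd in each argument these are
  the eight terms of the formula.
\<close>

lemma oint_eq_diff:
  assumes "finite S" and "continuous_on {min u v..max u v} f"
    and "\<And>x. min u v < x \<Longrightarrow> x < max u v \<Longrightarrow> x \<notin> S \<Longrightarrow> (f has_real_derivative f' x) (at x)"
  shows "oint u v f' = f v - f u"
proof (cases "u \<le> v")
  case True
  have "(f' has_integral (f v - f u)) {u..v}"
    using assms True
    by (intro fundamental_theorem_of_calculus_interior_strong[OF assms(1) True])
       (auto simp: has_real_derivative_iff_has_vector_derivative min_def max_def)
  with True show ?thesis by (simp add: oint_def integral_unique)
next
  case False
  have "(f' has_integral (f u - f v)) {v..u}"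
    using assms False
    by (intro fundamental_theorem_of_calculus_interior_strong[OF assms(1)])
       (auto simp: has_real_derivative_iff_has_vector_derivative min_def max_def)
  with False show ?thesis by (simp add: oint_def integral_unique)
qed

lemma has_integral_unit_interval_translate:
  assumes "\<And>x. isCont f x" and "\<And>x. x \<noteq> 0 \<Longrightarrow> (f has_real_derivative f' x) (at x)"
  shows "((\<lambda>x. f' (x - a)) has_integral f (1 - a) - f (- a)) {0..1}"
proof -
  have "((\<lambda>x. f' (x - a)) has_integral f (1 - a) - f (0 - a)) {0..1}"
  proof (rule fundamental_theorem_of_calculus_interior_strong[of "{a}"])
    show "continuous_on {0..1} (\<lambda>x. f (x - a))"
      by (intro continuous_at_imp_continuous_on ballI continuous_intros isCont_o2[OF _ assms(1)])
    fix x assume "x \<in> {0<..<1} - {a}"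
    then have "((\<lambda>x. f (x - a)) has_real_derivative f' (x - a) * 1) (at x)"
      by (intro DERIV_chain2[of f] assms(2) derivative_eq_intros) auto
    then show "((\<lambda>x. f (x - a)) has_vector_derivative f' (x - a)) (at x)"
      by (simp add: has_real_derivative_iff_has_vector_derivative)
  qed auto
  then show ?thesis by simp
qed

lemma has_real_derivative_abs: "x \<noteq> 0 \<Longrightarrow> (abs has_real_derivative sgn x) (at (x::real))"
proof -
  assume "x \<noteq> 0"
  then have "((\<lambda>x. sqrt (x\<^sup>2)) has_real_derivative inverse (sqrt (x\<^sup>2)) / 2 * (2 * x)) (at x)"
    by (intro DERIV_chain2[OF DERIV_real_sqrt] derivative_eq_intros) auto
  moreover have "inverse (sqrt (x\<^sup>2)) / 2 * (2 * x) = sgn x"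
    using \<open>x \<noteq> 0\<close> by (simp add: sgn_if)
  ultimately have "((\<lambda>x. sqrt (x\<^sup>2)) has_real_derivative sgn x) (at x)"
    by (rule DERIV_cong)
  then show ?thesis
    by (simp only: real_sqrt_abs)
qed

lemma abs_arsinh_le: "\<bar>arsinh x\<bar> \<le> \<bar>x :: real\<bar>"
proof -
  have "sinh y = (exp y - inverse (exp y)) / 2" for y :: real
    by (simp add: sinh_def exp_minus)
  then show ?thesis
    using real_le_abs_sinh[of "arsinh x"] by (metis sinh_arsinh_real)
qed

lemma sqrt_div_abs_sq_plus_one:
  "u \<noteq> 0 \<Longrightarrow> sqrt ((v / \<bar>u\<bar>)\<^sup>2 + 1) = sqrt (u\<^sup>2 + v\<^sup>2) / \<bar>u\<bar>"
  by (simp add: field_simps real_sqrt_divide flip: real_sqrt_abs)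

lemma half_sq_mult_arsinh_div_abs_has_real_derivative:
  "((\<lambda>v. u\<^sup>2 / 2 * arsinh (v / \<bar>u\<bar>)) has_real_derivative u\<^sup>2 / (2 * sqrt (u\<^sup>2 + v\<^sup>2))) (at v)"
proof (cases "u = 0")
  case False
  have "((\<lambda>v. arsinh (v / \<bar>u\<bar>)) has_real_derivative 1 / sqrt ((v / \<bar>u\<bar>)\<^sup>2 + 1) * (1 / \<bar>u\<bar>)) (at v)"
    by (intro DERIV_chain2[OF arsinh_real_has_field_derivative] DERIV_cdivide DERIV_ident)
  moreover have "1 / sqrt ((v / \<bar>u\<bar>)\<^sup>2 + 1) * (1 / \<bar>u\<bar>) = 1 / sqrt (u\<^sup>2 + v\<^sup>2)"
    unfolding sqrt_div_abs_sq_plus_one[OF False] using False by simp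
  ultimately show ?thesis
    using DERIV_cmult[where c = "u\<^sup>2 / 2"] by fastforce
qed simp

lemma arsinh_div_abs_has_real_derivative_denominator:
  assumes "u \<noteq> 0"
  shows "((\<lambda>u. arsinh (v / \<bar>u\<bar>)) has_real_derivative - v / (u * sqrt (u\<^sup>2 + v\<^sup>2))) (at u)"
proof -
  have "((\<lambda>u. arsinh (v / \<bar>u\<bar>)) has_real_derivative
          1 / sqrt ((v / \<bar>u\<bar>)\<^sup>2 + 1) * (- (v * sgn u) / (\<bar>u\<bar> * \<bar>u\<bar>))) (at u)"
    using assms
    by (intro DERIV_chain2[OF arsinh_real_has_field_derivative]
        DERIV_cong[OF DERIV_divide[OF DERIV_const has_real_derivative_abs]]) auto
  moreover have "sqrt (u\<^sup>2 + v\<^sup>2) > 0"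
    using assms by (intro real_sqrt_gt_zero add_pos_nonneg) auto
  then have "1 / sqrt ((v / \<bar>u\<bar>)\<^sup>2 + 1) * (- (v * sgn u) / (\<bar>u\<bar> * \<bar>u\<bar>))
      = - v / (u * sqrt (u\<^sup>2 + v\<^sup>2))"
    unfolding sqrt_div_abs_sq_plus_one[OF assms] using assms
    by (cases "u > 0") (auto simp: sgn_if field_simps)
  ultimately show ?thesis by simp
qed

lemma tendsto_cube_mult_arsinh_div_abs: "((\<lambda>u::real. u ^ 3 * arsinh (v / \<bar>u\<bar>)) \<longlongrightarrow> 0) (at 0)"
proof (rule Lim_null_comparison)
  have "\<bar>u ^ 3 * arsinh (v / \<bar>u\<bar>)\<bar> \<le> u\<^sup>2 * \<bar>v\<bar>" if "u \<noteq> 0" for u :: real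
  proof -
    have "\<bar>u ^ 3 * arsinh (v / \<bar>u\<bar>)\<bar> \<le> \<bar>u\<bar> ^ 3 * \<bar>v / \<bar>u\<bar>\<bar>"
      unfolding abs_mult power_abs by (intro mult_left_mono abs_arsinh_le) auto
    also have "\<dots> = u\<^sup>2 * \<bar>v\<bar>"
      using that by (simp add: abs_div power2_eq_square power3_eq_cube)
    finally show ?thesis .
  qed
  then show "\<forall>\<^sub>F u in at 0. norm (u ^ 3 * arsinh (v / \<bar>u\<bar>)) \<le> u\<^sup>2 * \<bar>v\<bar>"
    by (auto simp: eventually_at_filter)
  have "((\<lambda>u::real. u\<^sup>2 * \<bar>v\<bar>) \<longlongrightarrow> 0\<^sup>2 * \<bar>v\<bar>) (at 0)"
    by (intro tendsto_intros)
  then show "((\<lambda>u::real. u\<^sup>2 * \<bar>v\<bar>) \<longlongrightarrow> 0) (at 0)"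
    by simp
qed

text \<open>For \<open>u = 0\<close> the argument \<open>v / \<bar>u\<bar>\<close> is the junk value \<open>0\<close>, harmlessly so,
  because the term is multiplied by \<open>u\<^sup>2\<close>.\<close>

definition norm_antideriv :: "real \<Rightarrow> real \<Rightarrow> real" where
  "norm_antideriv u v = v / 2 * sqrt (u\<^sup>2 + v\<^sup>2) + u\<^sup>2 / 2 * arsinh (v / \<bar>u\<bar>)"

lemma norm_antideriv_zero_right [simp]: "norm_antideriv u 0 = 0"
  by (simp add: norm_antideriv_def)

lemma norm_antideriv_minus_left: "norm_antideriv (- u) v = norm_antideriv u v"
  by (simp add: norm_antideriv_def)

lemma norm_antideriv_minus_right: "norm_antideriv u (- v) = - norm_antideriv u v"
  by (simp add: norm_antideriv_def)

lemma norm_antideriv_scale: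
  assumes "t \<ge> 0"
  shows "norm_antideriv (t * u) (t * v) = t\<^sup>2 * norm_antideriv u v"
proof (cases "t = 0")
  case False
  with assms have "t > 0" by simp
  have "sqrt ((t * u)\<^sup>2 + (t * v)\<^sup>2) = t * sqrt (u\<^sup>2 + v\<^sup>2)"
    using \<open>t > 0\<close> by (simp add: power_mult_distrib real_sqrt_mult flip: distrib_left)
  moreover have "t * v / \<bar>t * u\<bar> = v / \<bar>u\<bar>"
    using \<open>t > 0\<close> by (simp add: abs_mult)
  ultimately show ?thesis
    by (simp add: norm_antideriv_def power_mult_distrib algebra_simps power2_eq_square)
qed (simp add: norm_antideriv_def)

lemma isCont_norm_antideriv_right: "isCont (norm_antideriv u) v"
  unfolding norm_antideriv_def [abs_def]
  by (cases "u = 0") (auto intro!: continuous_intros)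

lemma isCont_mult_norm_antideriv_left: "isCont (\<lambda>u. u * norm_antideriv u v) x"
proof (cases "x = 0")
  case False
  then show ?thesis
    unfolding norm_antideriv_def by (intro continuous_intros) auto
next
  case True
  have "(\<lambda>u. u * norm_antideriv u v)
      = (\<lambda>u. u * v / 2 * sqrt (u\<^sup>2 + v\<^sup>2) + u ^ 3 * arsinh (v / \<bar>u\<bar>) / 2)"
    by (simp add: fun_eq_iff norm_antideriv_def algebra_simps power2_eq_square power3_eq_cube)
  moreover have "((\<lambda>u. u * v / 2 * sqrt (u\<^sup>2 + v\<^sup>2) + u ^ 3 * arsinh (v / \<bar>u\<bar>) / 2)
      \<longlongrightarrow> 0 * v / 2 * sqrt (0\<^sup>2 + v\<^sup>2) + 0 / 2) (at 0)"
    by (intro tendsto_intros tendsto_cube_mult_arsinh_div_abs) simp_all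
  ultimately show ?thesis
    using True by (simp add: isCont_def)
qed

lemma norm_antideriv_has_real_derivative_right:
  assumes "u\<^sup>2 + v\<^sup>2 > 0"
  shows "(norm_antideriv u has_real_derivative sqrt (u\<^sup>2 + v\<^sup>2)) (at v)"
proof -
  define s where "s = sqrt (u\<^sup>2 + v\<^sup>2)"
  have "s > 0" "s * s = u\<^sup>2 + v\<^sup>2"
    using assms by (auto simp: s_def)
  have "(norm_antideriv u has_real_derivative s / 2 + v\<^sup>2 / (2 * s) + u\<^sup>2 / (2 * s)) (at v)"
    unfolding norm_antideriv_def [abs_def] s_def
    using assms
    by (intro DERIV_add half_sq_mult_arsinh_div_abs_has_real_derivative)
       (auto intro!: derivative_eq_intros simp: field_simps power2_eq_square)
  also have "s / 2 + v\<^sup>2 / (2 * s) + u\<^sup>2 / (2 * s) = (s * s + (u\<^sup>2 + v\<^sup>2)) / (2 * s)"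
    using \<open>s > 0\<close> by (simp add: field_simps)
  also have "\<dots> = s"
    using \<open>s > 0\<close> unfolding \<open>s * s = u\<^sup>2 + v\<^sup>2\<close>[symmetric] by simp
  finally show ?thesis
    by (simp add: s_def)
qed

lemma norm_antideriv_has_real_derivative_left:
  assumes "u \<noteq> 0"
  shows "((\<lambda>u. norm_antideriv u v) has_real_derivative u * arsinh (v / \<bar>u\<bar>)) (at u)"
proof -
  define s where "s = sqrt (u\<^sup>2 + v\<^sup>2)"
  have "s > 0"
    using assms unfolding s_def by (intro real_sqrt_gt_zero add_pos_nonneg) auto
  have "((\<lambda>u. v / 2 * sqrt (u\<^sup>2 + v\<^sup>2)) has_real_derivative v / 2 * (u / s)) (at u)"
    using \<open>s > 0\<close> unfolding s_def by (auto intro!: derivative_eq_intros simp: field_simps)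
  moreover have "((\<lambda>u. u\<^sup>2 / 2 * arsinh (v / \<bar>u\<bar>)) has_real_derivative
      u * arsinh (v / \<bar>u\<bar>) + - v / (u * s) * (u\<^sup>2 / 2)) (at u)"
    unfolding s_def
    by (intro DERIV_mult arsinh_div_abs_has_real_derivative_denominator assms)
       (auto intro!: derivative_eq_intros)
  ultimately have "((\<lambda>u. norm_antideriv u v) has_real_derivative
      v / 2 * (u / s) + (u * arsinh (v / \<bar>u\<bar>) + - v / (u * s) * (u\<^sup>2 / 2))) (at u)"
    unfolding norm_antideriv_def by (rule DERIV_add)
  moreover have "v / 2 * (u / s) + (u * w + - v / (u * s) * (u\<^sup>2 / 2)) = u * w" for w
    using assms \<open>s > 0\<close> by (simp add: field_simps power2_eq_square)
  ultimately show ?thesis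
    by simp
qed

lemma oint_sqrt_sum_sq: "oint 0 w (\<lambda>y. sqrt (x\<^sup>2 + y\<^sup>2)) = norm_antideriv x w"
proof -
  have "oint 0 w (\<lambda>y. sqrt (x\<^sup>2 + y\<^sup>2)) = norm_antideriv x w - norm_antideriv x 0"
    by (rule oint_eq_diff[of "{0}"])
       (auto intro!: continuous_at_imp_continuous_on isCont_norm_antideriv_right
          norm_antideriv_has_real_derivative_right simp: add_nonneg_pos)
  then show ?thesis
    by simp
qed

lemma A1_eq: "A1 a b = a / 3 * norm_antideriv a b"
proof (cases "a = 0")
  case False
  have "A1 a b = oint 0 a (\<lambda>x. norm_antideriv x (b * x / a))"
    using False by (simp add: A1_def oint_sqrt_sum_sq)
  also have "\<dots> = a ^ 3 / (3 * a\<^sup>2) * norm_antideriv a b - 0 ^ 3 / (3 * a\<^sup>2) * norm_antideriv a b"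
  proof (rule oint_eq_diff[of "{}"])
    fix x assume "min 0 a < x" "x < max 0 a"
    then have "x / a \<ge> 0"
      using False by (cases "a > 0") (auto simp: min_def max_def zero_le_divide_iff)
    then have "norm_antideriv x (b * x / a) = (x / a)\<^sup>2 * norm_antideriv a b"
      using norm_antideriv_scale[of "x / a" a b] False by (simp add: mult.commute)
    moreover have "((\<lambda>x. x ^ 3 / (3 * a\<^sup>2) * norm_antideriv a b) has_real_derivative
        (x / a)\<^sup>2 * norm_antideriv a b) (at x)"
      using False by (auto intro!: derivative_eq_intros simp: field_simps power2_eq_square)
    ultimately show "((\<lambda>x. x ^ 3 / (3 * a\<^sup>2) * norm_antideriv a b) has_real_derivative
        norm_antideriv x (b * x / a)) (at x)"
      by simp
  qed (use False in \<open>auto intro!: continuous_intros\<close>)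
  also have "\<dots> = a / 3 * norm_antideriv a b"
    using False by (simp add: power2_eq_square power3_eq_cube)
  finally show ?thesis .
qed (simp add: A1_def)

lemma A1_minus_left: "A1 (- a) b = - A1 a b"
  by (simp add: A1_eq norm_antideriv_minus_left)

lemma A1_minus_right: "A1 a (- b) = - A1 a b"
  by (simp add: A1_eq norm_antideriv_minus_right)

lemma A1_sym_has_real_derivative:
  assumes "p \<noteq> 0"
  shows "((\<lambda>p. A1 p q + A1 q p) has_real_derivative norm_antideriv p q) (at p)"
proof -
  have "((\<lambda>p. p / 3 * norm_antideriv p q + q / 3 * norm_antideriv q p) has_real_derivative
      1 / 3 * norm_antideriv p q + p * arsinh (q / \<bar>p\<bar>) * (p / 3) + q / 3 * sqrt (q\<^sup>2 + p\<^sup>2)) (at p)"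
    using assms
    by (intro DERIV_add[OF DERIV_mult[OF DERIV_cdivide[OF DERIV_ident]
          norm_antideriv_has_real_derivative_left] DERIV_cmult[OF norm_antideriv_has_real_derivative_right]])
       (auto simp: add_nonneg_pos)
  moreover have "1 / 3 * norm_antideriv p q + p * arsinh (q / \<bar>p\<bar>) * (p / 3) + q / 3 * sqrt (q\<^sup>2 + p\<^sup>2)
      = norm_antideriv p q"
    by (simp add: norm_antideriv_def add.commute algebra_simps power2_eq_square)
  ultimately show ?thesis
    by (simp add: A1_eq)
qed

lemma isCont_A1_sym: "isCont (\<lambda>p. A1 p q + A1 q p) x"
proof -
  have "(\<lambda>p. A1 p q + A1 q p) = (\<lambda>p. p * norm_antideriv p q / 3 + q / 3 * norm_antideriv q p)"
    by (simp add: fun_eq_iff A1_eq)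
  then show ?thesis
    by (auto intro!: continuous_intros isCont_mult_norm_antideriv_left isCont_norm_antideriv_right)
qed

theorem theorem24:
  fixes a b :: real
  shows "g1 a b = A1 a b + A1 b a + A1 b (1 - a) + A1 (1 - a) b
           + A1 (1 - a) (1 - b) + A1 (1 - b) (1 - a) + A1 (1 - b) a + A1 a (1 - b)"
proof -
  define K where "K p q = A1 p q + A1 q p" for p q
  have inner: "integral {0..1} (\<lambda>x. sqrt ((x - a)\<^sup>2 + (y - b)\<^sup>2))
      = norm_antideriv (y - b) (1 - a) - norm_antideriv (y - b) (- a)" for y
  proof -
    have "((\<lambda>x. sqrt ((y - b)\<^sup>2 + (x - a)\<^sup>2)) has_integral
        norm_antideriv (y - b) (1 - a) - norm_antideriv (y - b) (- a)) {0..1}"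
      by (rule has_integral_unit_interval_translate)
         (auto intro: isCont_norm_antideriv_right norm_antideriv_has_real_derivative_right simp: add_nonneg_pos)
    then show ?thesis
      by (simp add: integral_unique add.commute)
  qed
  have outer: "((\<lambda>y. norm_antideriv (y - b) q) has_integral K (1 - b) q - K (- b) q) {0..1}" for q
    unfolding K_def
    by (rule has_integral_unit_interval_translate
          [where f = "\<lambda>p. A1 p q + A1 q p" and f' = "\<lambda>p. norm_antideriv p q"])
       (auto intro: isCont_A1_sym A1_sym_has_real_derivative)
  have "g1 a b = integral {0..1} (\<lambda>y. norm_antideriv (y - b) (1 - a) - norm_antideriv (y - b) (- a))"
    by (simp add: g1_def inner)
  also have "\<dots> = (K (1 - b) (1 - a) - K (- b) (1 - a)) - (K (1 - b) (- a) - K (- b) (- a))"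
    by (intro integral_unique has_integral_diff outer)
  finally show ?thesis
    by (simp add: K_def A1_minus_left A1_minus_right)
qed

end
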